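(* Let $\mathbb{K}$ be an ordered field, $V$ a finite-dimensional vector space over $\mathbb{K}$, and $\varphi:V\to V$ a $\mathbb{K}$-linear automorphism all of whose eigenvalues (roots of the characteristic polynomial, with multiplicity) lie in $\mathbb{K}$ and are positive. Then $\varphi$ is order-preserving: there is a subset $P\subset V$ with $V=P\sqcup\{0\}\sqcup(-P)$, $P+P\subset P$, and $\varphi(P)\subset P$.
   Context: An ordering on a field $\mathbb{K}$ is a subset $Q$ with $\mathbb{K}=Q\sqcup\{0\}\sqcup(-Q)$ and $Q$ closed under addition and multiplication; elements of $Q$ are called positive. *)

theory Defs
  imports "Jordan_Normal_Form.Char_Poly"
begin

end

theory Submission
  imports Defs "Jordan_Normal_Form.Schur_Decomposition"
begin

(* Since the characteristic polynomial splits, A = P B Q with Q = P^-1 and B upper triangular,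
   the eigenvalues on its diagonal. Call x positive if its last nonzero coordinate is positive;
   this is an ordering of K^n. An upper triangular B with positive diagonal keeps that
   coordinate positive and all later ones zero, so B preserves the ordering, and A preserves
   its pull-back along Q. *)

definition positive_cone :: "nat \<Rightarrow> 'a::ab_group_add vec set \<Rightarrow> bool" where
  "positive_cone n C \<longleftrightarrow> carrier_vec n = C \<union> {0\<^sub>v n} \<union> (\<lambda>v. - v) ` C
     \<and> 0\<^sub>v n \<notin> C \<and> C \<inter> (\<lambda>v. - v) ` C = {} \<and> (\<forall>u\<in>C. \<forall>v\<in>C. u + v \<in> C)"

lemma positive_cone_mat_preimage:
  fixes Q :: "'a::comm_ring_1 mat"
  assumes cone: "positive_cone n C"
    and P: "P \<in> carrier_mat n n" and Q: "Q \<in> carrier_mat n n" and inv: "P * Q = 1\<^sub>m n"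
  shows "positive_cone n {v \<in> carrier_vec n. Q *\<^sub>v v \<in> C}" (is "positive_cone n ?D")
proof -
  have Q_neg: "Q *\<^sub>v (- v) = - (Q *\<^sub>v v)" if "v \<in> carrier_vec n" for v
    using Q that by (intro eq_vecI) auto
  have Q_inj: "v = 0\<^sub>v n" if "v \<in> carrier_vec n" "Q *\<^sub>v v = 0\<^sub>v n" for v
  proof -
    have "v = (P * Q) *\<^sub>v v" using inv that(1) by simp
    also have "\<dots> = P *\<^sub>v (Q *\<^sub>v v)" using P Q that(1) by (rule assoc_mult_mat_vec)
    finally show ?thesis using P that(2) by auto
  qed
  have "v \<in> ?D \<union> {0\<^sub>v n} \<union> (\<lambda>v. - v) ` ?D" if v: "v \<in> carrier_vec n" for v
  proof -
    have "Q *\<^sub>v v \<in> carrier_vec n" using Q v by simp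
    then consider "Q *\<^sub>v v \<in> C" | "Q *\<^sub>v v = 0\<^sub>v n" | c where "c \<in> C" "Q *\<^sub>v v = - c"
      using cone unfolding positive_cone_def by blast
    then show ?thesis
    proof cases
      case 3
      then have "- v \<in> ?D" using v Q_neg[OF v] by simp
      moreover have "v = - (- v)" by simp
      ultimately show ?thesis by blast
    qed (use v Q_inj in auto)
  qed
  then have "carrier_vec n = ?D \<union> {0\<^sub>v n} \<union> (\<lambda>v. - v) ` ?D"
    by auto
  moreover have "?D \<inter> (\<lambda>v. - v) ` ?D = {}"
  proof -
    have False if "u \<in> ?D" "- u \<in> ?D" for u
      using that cone Q_neg[of u] unfolding positive_cone_def by auto
    then show ?thesis by blast
  qed
  moreover have "u + v \<in> ?D" if "u \<in> ?D" "v \<in> ?D" for u v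
  proof -
    have "\<forall>u\<in>C. \<forall>v\<in>C. u + v \<in> C" using cone by (simp add: positive_cone_def)
    then show ?thesis using that Q by (simp add: mult_add_distrib_mat_vec)
  qed
  moreover have "0\<^sub>v n \<notin> ?D"
  proof -
    have "Q *\<^sub>v 0\<^sub>v n = 0\<^sub>v n" using Q by auto
    then show ?thesis using cone by (simp add: positive_cone_def)
  qed
  ultimately show ?thesis
    unfolding positive_cone_def by blast
qed

definition last_nonzero_pos :: "nat \<Rightarrow> 'a::{zero,ord} vec \<Rightarrow> bool" where
  "last_nonzero_pos n x \<longleftrightarrow> (\<exists>k<n. x $ k > 0 \<and> (\<forall>j. k < j \<and> j < n \<longrightarrow> x $ j = 0))"

lemma last_nonzero_pos_add:
  fixes x y :: "'a::linordered_ab_group_add vec"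
  assumes "x \<in> carrier_vec n" "y \<in> carrier_vec n" "last_nonzero_pos n x" "last_nonzero_pos n y"
  shows "last_nonzero_pos n (x + y)"
proof -
  obtain k where k: "k < n" "x $ k > 0" "\<forall>j. k < j \<and> j < n \<longrightarrow> x $ j = 0"
    using assms(3) unfolding last_nonzero_pos_def by auto
  obtain l where l: "l < n" "y $ l > 0" "\<forall>j. l < j \<and> j < n \<longrightarrow> y $ j = 0"
    using assms(4) unfolding last_nonzero_pos_def by auto
  have "(x + y) $ max k l > 0"
  proof (cases k l rule: linorder_cases)
    case less
    then show ?thesis using k l assms(1,2) by simp
  next
    case equal
    then show ?thesis using k l assms(1,2) by (simp add: add_pos_pos)
  next
    case greater
    then show ?thesis using k l assms(1,2) by simp
  qed
  moreover have "(x + y) $ j = 0" if "max k l < j" "j < n" for j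
    using k(3) l(3) assms(1,2) that by simp
  moreover have "max k l < n"
    using k(1) l(1) by simp
  ultimately show ?thesis
    unfolding last_nonzero_pos_def by blast
qed

lemma last_nonzero_pos_uminus:
  fixes x :: "'a::linordered_ab_group_add vec"
  assumes "x \<in> carrier_vec n" "last_nonzero_pos n x"
  shows "\<not> last_nonzero_pos n (- x)"
proof
  assume "last_nonzero_pos n (- x)"
  then obtain l where l: "l < n" "(- x) $ l > 0" "\<forall>j. l < j \<and> j < n \<longrightarrow> (- x) $ j = 0"
    unfolding last_nonzero_pos_def by auto
  obtain k where k: "k < n" "x $ k > 0" "\<forall>j. k < j \<and> j < n \<longrightarrow> x $ j = 0"
    using assms(2) unfolding last_nonzero_pos_def by auto
  show False
    using k l assms(1) by (cases k l rule: linorder_cases) auto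
qed

lemma last_nonzero_pos_total:
  fixes x :: "'a::linordered_ab_group_add vec"
  assumes x: "x \<in> carrier_vec n" and "x \<noteq> 0\<^sub>v n"
  shows "last_nonzero_pos n x \<or> last_nonzero_pos n (- x)"
proof -
  define S where "S = {k. k < n \<and> x $ k \<noteq> 0}"
  have "finite S" "S \<noteq> {}"
    using assms by (auto simp: S_def vec_eq_iff)
  define k where "k = Max S"
  have k: "k < n" "x $ k \<noteq> 0"
    using Max_in[OF \<open>finite S\<close> \<open>S \<noteq> {}\<close>] by (auto simp: k_def S_def)
  have later: "x $ j = 0" if "k < j" "j < n" for j
  proof (rule ccontr)
    assume "x $ j \<noteq> 0"
    then have "j \<le> k"
      using Max_ge[OF \<open>finite S\<close>, of j] \<open>j < n\<close> by (simp add: k_def S_def)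
    then show False using \<open>k < j\<close> by simp
  qed
  show ?thesis
  proof (cases "x $ k > 0")
    case True
    then show ?thesis unfolding last_nonzero_pos_def using k later by blast
  next
    case False
    then have "(- x) $ k > 0" using k x by auto
    moreover have "(- x) $ j = 0" if "k < j" "j < n" for j
      using later[OF that] that x by simp
    ultimately show ?thesis unfolding last_nonzero_pos_def using k by blast
  qed
qed

lemma positive_cone_last_nonzero_pos:
  "positive_cone n {x :: 'a::linordered_ab_group_add vec. x \<in> carrier_vec n \<and> last_nonzero_pos n x}"
  (is "positive_cone n ?C")
proof -
  have "x \<in> ?C \<union> {0\<^sub>v n} \<union> (\<lambda>v. - v) ` ?C" if x: "x \<in> carrier_vec n" for x
  proof (cases "x = 0\<^sub>v n")
    case False
    moreover have "x = - (- x)" "- x \<in> carrier_vec n" using x by auto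
    ultimately show ?thesis
      using last_nonzero_pos_total[OF x] x by blast
  qed simp
  then have "carrier_vec n = ?C \<union> {0\<^sub>v n} \<union> (\<lambda>v. - v) ` ?C"
    by auto
  moreover have "?C \<inter> (\<lambda>v. - v) ` ?C = {}"
    using last_nonzero_pos_uminus by fastforce
  moreover have "0\<^sub>v n \<notin> ?C"
    by (simp add: last_nonzero_pos_def)
  moreover have "u + v \<in> ?C" if "u \<in> ?C" "v \<in> ?C" for u v
    using that last_nonzero_pos_add[of u n v] by simp
  ultimately show ?thesis
    unfolding positive_cone_def by blast
qed

lemma upper_triangular_mult_vec_index:
  fixes B :: "'a::semiring_0 mat"
  assumes B: "B \<in> carrier_mat n n" "upper_triangular B"
    and x: "x \<in> carrier_vec n" and i: "i < n" and later: "\<forall>j. i < j \<and> j < n \<longrightarrow> x $ j = 0"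
  shows "(B *\<^sub>v x) $ i = B $$ (i, i) * x $ i"
proof -
  have "(B *\<^sub>v x) $ i = (\<Sum>j\<in>{0..<n}. B $$ (i, j) * x $ j)"
    using B x i by (simp add: mult_mat_vec_def scalar_prod_def)
  also have "\<dots> = B $$ (i, i) * x $ i + (\<Sum>j\<in>{0..<n} - {i}. B $$ (i, j) * x $ j)"
    using i by (simp add: sum.remove)
  also have "(\<Sum>j\<in>{0..<n} - {i}. B $$ (i, j) * x $ j) = 0"
  proof (intro sum.neutral ballI)
    fix j assume "j \<in> {0..<n} - {i}"
    then consider "j < i" | "i < j \<and> j < n" by fastforce
    then show "B $$ (i, j) * x $ j = 0"
      by cases (use B i later in \<open>auto simp: upper_triangular_def\<close>)
  qed
  finally show ?thesis by simp
qed

lemma last_nonzero_pos_upper_triangular_mult: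
  fixes B :: "'a::linordered_idom mat"
  assumes B: "B \<in> carrier_mat n n" "upper_triangular B" and diag: "\<forall>i<n. B $$ (i, i) > 0"
    and x: "x \<in> carrier_vec n" "last_nonzero_pos n x"
  shows "last_nonzero_pos n (B *\<^sub>v x)"
proof -
  obtain k where k: "k < n" "x $ k > 0" "\<forall>j. k < j \<and> j < n \<longrightarrow> x $ j = 0"
    using x(2) unfolding last_nonzero_pos_def by auto
  have "(B *\<^sub>v x) $ k > 0"
    using upper_triangular_mult_vec_index[OF B x(1) k(1) k(3)] diag k by simp
  moreover have "(B *\<^sub>v x) $ j = 0" if "k < j" "j < n" for j
    using upper_triangular_mult_vec_index[OF B x(1) that(2)] k(3) that by simp
  ultimately show ?thesis unfolding last_nonzero_pos_def using k(1) by blast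
qed

(* The library's Schur decomposition is stated for fields with a conjugation; an ordered field
   with the identity conjugation is one, but an instance cannot be given for a type variable,
   so we work in an isomorphic copy of the field. *)
typedef 'a self_conj = "UNIV :: 'a::linordered_field set" by auto
setup_lifting type_definition_self_conj

instantiation self_conj :: (linordered_field) field
begin
lift_definition zero_self_conj :: "'a self_conj" is 0 .
lift_definition one_self_conj :: "'a self_conj" is 1 .
lift_definition plus_self_conj :: "'a self_conj \<Rightarrow> 'a self_conj \<Rightarrow> 'a self_conj" is "(+)" .
lift_definition minus_self_conj :: "'a self_conj \<Rightarrow> 'a self_conj \<Rightarrow> 'a self_conj" is "(-)" .
lift_definition uminus_self_conj :: "'a self_conj \<Rightarrow> 'a self_conj" is uminus .
lift_definition times_self_conj :: "'a self_conj \<Rightarrow> 'a self_conj \<Rightarrow> 'a self_conj" is "(*)" .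
lift_definition divide_self_conj :: "'a self_conj \<Rightarrow> 'a self_conj \<Rightarrow> 'a self_conj" is "(/)" .
lift_definition inverse_self_conj :: "'a self_conj \<Rightarrow> 'a self_conj" is inverse .
instance
  by (standard; transfer; simp add: algebra_simps divide_inverse)
end

instantiation self_conj :: (linordered_field) conjugatable_ordered_field
begin
lift_definition less_eq_self_conj :: "'a self_conj \<Rightarrow> 'a self_conj \<Rightarrow> bool" is "(\<le>)" .
lift_definition less_self_conj :: "'a self_conj \<Rightarrow> 'a self_conj \<Rightarrow> bool" is "(<)" .
definition conjugate_self_conj :: "'a self_conj \<Rightarrow> 'a self_conj" where
  "conjugate_self_conj x = x"
instance
  by (standard; (unfold conjugate_self_conj_def)?; transfer; auto)
end

interpretation Abs_self_conj: comm_ring_hom "Abs_self_conj :: 'a::linordered_field \<Rightarrow> 'a self_conj"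
  by unfold_locales
    (simp_all add: zero_self_conj_def one_self_conj_def plus_self_conj_def times_self_conj_def
      Abs_self_conj_inverse)

interpretation Rep_self_conj: comm_ring_hom "Rep_self_conj :: 'a::linordered_field self_conj \<Rightarrow> 'a"
  by unfold_locales (transfer; simp)+

lemma (in semiring_hom) similar_mat_wit_hom:
  assumes "similar_mat_wit A B P Q"
  shows "similar_mat_wit (mat\<^sub>h A) (mat\<^sub>h B) (mat\<^sub>h P) (mat\<^sub>h Q)"
proof -
  define n where "n = dim_row A"
  note wit = similar_mat_witD[OF n_def assms]
  show ?thesis
  proof (rule similar_mat_witI)
    show "mat\<^sub>h P * mat\<^sub>h Q = 1\<^sub>m n" "mat\<^sub>h Q * mat\<^sub>h P = 1\<^sub>m n"
      using wit by (metis mat_hom_mult mat_hom_one)+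
    show "mat\<^sub>h A = mat\<^sub>h P * mat\<^sub>h B * mat\<^sub>h Q"
      using wit by (metis mat_hom_mult mult_carrier_mat)
  qed (use wit in auto)
qed

lemma (in semiring_hom) upper_triangular_hom:
  assumes "A \<in> carrier_mat n n" "upper_triangular A"
  shows "upper_triangular (mat\<^sub>h A)"
  using assms unfolding upper_triangular_def by auto

lemma triangularizable:
  fixes A :: "'a::linordered_field mat"
  assumes A: "A \<in> carrier_mat n n"
    and char_poly: "char_poly A = (\<Prod>a\<leftarrow>as. [:- a, 1:])"
  shows "\<exists>B P Q. similar_mat_wit A B P Q \<and> upper_triangular B \<and> diag_mat B = as"
proof -
  interpret map_poly_comm_ring_hom "Abs_self_conj :: 'a \<Rightarrow> 'a self_conj" ..
  define A' where "A' = map_mat Abs_self_conj A"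
  have A': "A' \<in> carrier_mat n n" using A by (simp add: A'_def)
  have "char_poly A' = (\<Prod>a\<leftarrow>map Abs_self_conj as. [:- a, 1:])"
    unfolding A'_def Abs_self_conj.char_poly_hom[OF A] char_poly hom_prod_list
    by (simp add: o_def Abs_self_conj.hom_uminus)
  moreover obtain B' P' Q' where "schur_decomposition A' (map Abs_self_conj as) = (B', P', Q')"
    by (metis prod_cases3)
  ultimately have "similar_mat_wit A' B' P' Q'" "upper_triangular B'"
    and diag: "diag_mat B' = map Abs_self_conj as"
    using schur_decomposition[OF A'] by blast+
  moreover have "map_mat Rep_self_conj A' = A"
    unfolding A'_def by (rule eq_matI) (auto simp: Abs_self_conj_inverse)
  moreover have B': "B' \<in> carrier_mat n n"
    using similar_mat_witD2[OF A' \<open>similar_mat_wit A' B' P' Q'\<close>] by blast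
  moreover have "diag_mat (map_mat Rep_self_conj B') = as"
    by (simp add: diag_mat_map[OF B'] diag o_def Abs_self_conj_inverse)
  ultimately show ?thesis
    using Rep_self_conj.similar_mat_wit_hom Rep_self_conj.upper_triangular_hom by metis
qed

lemma similar_mat_wit_mult_mat_vec:
  assumes "similar_mat_wit A B P Q" "v \<in> carrier_vec (dim_row A)"
  shows "Q *\<^sub>v (A *\<^sub>v v) = B *\<^sub>v (Q *\<^sub>v v)"
proof -
  note wit = similar_mat_witD[OF refl assms(1)]
  have BQ: "B * Q \<in> carrier_mat (dim_row A) (dim_row A)"
    using wit(5,7) by (rule mult_carrier_mat)
  have "Q * A = Q * (P * (B * Q))"
    by (subst wit(3)) (rule arg_cong[OF assoc_mult_mat[OF wit(6) wit(5) wit(7)]])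
  also have "\<dots> = (Q * P) * (B * Q)"
    by (rule assoc_mult_mat[OF wit(7) wit(6) BQ, symmetric])
  also have "\<dots> = B * Q"
    unfolding wit(2) using BQ by (rule left_mult_one_mat)
  finally have QA: "Q * A = B * Q" .
  have "Q *\<^sub>v (A *\<^sub>v v) = (Q * A) *\<^sub>v v"
    by (rule assoc_mult_mat_vec[OF wit(7) wit(4) assms(2), symmetric])
  also have "\<dots> = B *\<^sub>v (Q *\<^sub>v v)"
    unfolding QA by (rule assoc_mult_mat_vec[OF wit(5) wit(7) assms(2)])
  finally show ?thesis .
qed

theorem mainTheorem6:
  fixes A :: "'a :: linordered_field mat" and n :: nat
  assumes "A \<in> carrier_mat n n"
    and "invertible_mat A"
    and "\<exists>as. char_poly A = (\<Prod>a\<leftarrow>as. [:- a, 1:]) \<and> (\<forall>a\<in>set as. a > 0)"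
  shows "\<exists>P. carrier_vec n = P \<union> {0\<^sub>v n} \<union> (\<lambda>v. - v) ` P
            \<and> 0\<^sub>v n \<notin> P \<and> P \<inter> (\<lambda>v. - v) ` P = {}
            \<and> (\<forall>u\<in>P. \<forall>v\<in>P. u + v \<in> P)
            \<and> (\<forall>v\<in>P. A *\<^sub>v v \<in> P)"
proof -
  obtain as where char_poly: "char_poly A = (\<Prod>a\<leftarrow>as. [:- a, 1:])" and pos: "\<forall>a\<in>set as. a > 0"
    using assms(3) by blast
  obtain B P Q where wit: "similar_mat_wit A B P Q" and B: "upper_triangular B" "diag_mat B = as"
    using triangularizable[OF assms(1) char_poly] by blast
  note mats = similar_mat_witD2[OF assms(1) wit]
  have diag: "\<forall>i<n. B $$ (i, i) > 0"
    using B(2) pos mats(5) by (force simp: diag_mat_def)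
  define L where "L = {x :: 'a vec. x \<in> carrier_vec n \<and> last_nonzero_pos n x}"
  define C where "C = {v \<in> carrier_vec n. Q *\<^sub>v v \<in> L}"
  have "positive_cone n C"
    unfolding C_def L_def
    by (rule positive_cone_mat_preimage[OF positive_cone_last_nonzero_pos mats(6,7,1)])
  moreover have "A *\<^sub>v v \<in> C" if "v \<in> C" for v
  proof -
    have v: "v \<in> carrier_vec (dim_row A)" "Q *\<^sub>v v \<in> L"
      using that assms(1) by (auto simp: C_def)
    then have "Q *\<^sub>v (A *\<^sub>v v) \<in> L"
      using last_nonzero_pos_upper_triangular_mult[OF mats(5) B(1) diag] mats(5)
      by (simp add: similar_mat_wit_mult_mat_vec[OF wit v(1)] L_def)
    then show ?thesis using v(1) assms(1) by (simp add: C_def)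
  qed
  ultimately show ?thesis unfolding positive_cone_def by blast
qed
end
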